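(* Suppose RLSVI (as in the context) is applied with parameters $(\lambda,v,\bar\theta)$ with $v/\lambda=\beta\geq 2$, $v=H^2$ and $\bar\theta = H\mathbf{1}$ (all entries equal to $H$). Then for every $L\in\mathbb{N}$, \[ \mathbb{E}\Big[\max_{\ell\le L,\ t<H}\|V_{Q_{\ell,t+1}}\|_\infty\Big] \leq 2H + H^2\sqrt{\log(1+|\mathcal{X}||\mathcal{A}|HL)}. \]
   Context: Setting: episodic MDP with finite state set $\mathcal{X}$, finite action set $\mathcal{A}$, horizon $H$; in episode $k$ and period $t\in\{0,\dots,H-1\}$ the agent is in $x^k_t$, takes $a^k_t$ and observes an outcome $(r^k_{t+1},x^k_{t+1})\in\{0,1\}\times\mathcal{X}$ (rewards in $\{0,1\}$). RLSVI with parameters $\bar\theta$, $v,\lambda>0$: $D_{\ell-1}(t,x,a)$ is the multiset of outcomes from episodes $k<\ell$ with $x^k_t=x,a^k_t=a$, $n_\ell(t,x,a)$ its size, $\sigma^2_\ell(t,x,a) = (1/\lambda+n_\ell(t,x,a)/v)^{-1}$, $w_\ell(t,x,a)=\sigma_\ell(t,x,a)\xi_{\ell,t,x,a}$ with $\xi$'s i.i.d. standard normal independent of everything else; \[F_{\ell,t}Q(x,a) = \sigma^2_\ell(t,x,a)\Big(\frac{\bar\theta_{t,x,a}}{\lambda}+\frac1v\sum_{(r,x')\in D_{\ell-1}(t,x,a)}\big(r+\max_{a'}Q(x',a')\big)\Big)+w_\ell(t,x,a);\] $Q_{\ell,H}=0$, $Q_{\ell,t}=F_{\ell,t}Q_{\ell,t+1}$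 for $t<H$; actions are greedy w.r.t. $Q_{\ell,t}$. For $Q\in\mathbb{R}^{\mathcal{X}\times\mathcal{A}}$, $V_Q(r,x') = r+\max_{a'}Q(x',a')$ is a function on $\{0,1\}\times\mathcal{X}$ and $\|\cdot\|_\infty$ is its sup norm. *)

theory Defs
  imports "HOL-Probability.Probability"
begin

(* A step of a trajectory: (state x_t, action a_t, reward r_{t+1}, next state x_{t+1}).
   Rewards in {0,1} are encoded as bool (True = 1). *)
type_synonym ('x,'a) step = "'x \<times> 'a \<times> bool \<times> 'x"

definition rew :: "bool \<Rightarrow> real" where
  "rew r = (if r then 1 else 0)"

definition VQ :: "('x::finite \<Rightarrow> 'a::finite \<Rightarrow> real) \<Rightarrow> bool \<Rightarrow> 'x \<Rightarrow> real" where
  "VQ Q r y = rew r + Max (range (Q y))"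

definition VQnorm :: "('x::finite \<Rightarrow> 'a::finite \<Rightarrow> real) \<Rightarrow> real" where
  "VQnorm Q = Max {\<bar>VQ Q r y\<bar> | r y. True}"

definition sig2 :: "real \<Rightarrow> real \<Rightarrow> nat \<Rightarrow> real" where
  "sig2 lam v n = inverse (1 / lam + real n / v)"

(* episodes k with 1 <= k < l whose period-t state-action pair is (x,a);
   hist k t is the step of episode k in period t *)
definition Didx :: "(nat \<Rightarrow> nat \<Rightarrow> ('x,'a) step) \<Rightarrow> nat \<Rightarrow> nat \<Rightarrow> 'x \<Rightarrow> 'a \<Rightarrow> nat set" where
  "Didx hist l t x a = {k \<in> {1..<l}. fst (hist k t) = x \<and> fst (snd (hist k t)) = a}"

definition Fop :: "real \<Rightarrow> real \<Rightarrow> (nat \<Rightarrow> 'x \<Rightarrow> 'a \<Rightarrow> real) \<Rightarrow> (nat \<Rightarrow> nat \<Rightarrow> 'x \<Rightarrow> 'a \<Rightarrow> real)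
    \<Rightarrow> (nat \<Rightarrow> nat \<Rightarrow> ('x::finite,'a::finite) step) \<Rightarrow> nat \<Rightarrow> nat
    \<Rightarrow> ('x \<Rightarrow> 'a \<Rightarrow> real) \<Rightarrow> 'x \<Rightarrow> 'a \<Rightarrow> real" where
  "Fop lam v thbar xi hist l t Q x a =
     (let n = card (Didx hist l t x a) in
      sig2 lam v n * (thbar t x a / lam
        + (1 / v) * (\<Sum>k\<in>Didx hist l t x a. VQ Q (fst (snd (snd (hist k t)))) (snd (snd (snd (hist k t))))))
      + sqrt (sig2 lam v n) * xi l t x a)"

(* Qb m = Q_{l,H-m}: backward recursion Q_{l,H} = 0, Q_{l,t} = F_{l,t} Q_{l,t+1} *)
fun Qb :: "nat \<Rightarrow> real \<Rightarrow> real \<Rightarrow> (nat \<Rightarrow> 'x \<Rightarrow> 'a \<Rightarrow> real) \<Rightarrow> (nat \<Rightarrow> nat \<Rightarrow> 'x \<Rightarrow> 'a \<Rightarrow> real)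
    \<Rightarrow> (nat \<Rightarrow> nat \<Rightarrow> ('x::finite,'a::finite) step) \<Rightarrow> nat \<Rightarrow> nat \<Rightarrow> 'x \<Rightarrow> 'a \<Rightarrow> real" where
  "Qb H lam v thbar xi hist l 0 = (\<lambda>x a. 0)"
| "Qb H lam v thbar xi hist l (Suc m) =
     Fop lam v thbar xi hist l (H - Suc m) (Qb H lam v thbar xi hist l m)"

definition Qv :: "nat \<Rightarrow> real \<Rightarrow> real \<Rightarrow> (nat \<Rightarrow> 'x \<Rightarrow> 'a \<Rightarrow> real) \<Rightarrow> (nat \<Rightarrow> nat \<Rightarrow> 'x \<Rightarrow> 'a \<Rightarrow> real)
    \<Rightarrow> (nat \<Rightarrow> nat \<Rightarrow> ('x::finite,'a::finite) step) \<Rightarrow> nat \<Rightarrow> nat \<Rightarrow> 'x \<Rightarrow> 'a \<Rightarrow> real" where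
  "Qv H lam v thbar xi hist l t = Qb H lam v thbar xi hist l (H - t)"

(* states of episode l, given the Q-functions q t of the episode, greedy selector sel,
   the environment outcome table env and initial state x0 *)
primrec epSt :: "(('a \<Rightarrow> real) \<Rightarrow> 'a) \<Rightarrow> (nat \<times> nat \<times> 'x \<times> 'a \<Rightarrow> bool \<times> 'x)
    \<Rightarrow> nat \<Rightarrow> (nat \<Rightarrow> 'x \<Rightarrow> 'a \<Rightarrow> real) \<Rightarrow> 'x \<Rightarrow> nat \<Rightarrow> 'x" where
  "epSt sel env l q x0 0 = x0"
| "epSt sel env l q x0 (Suc t) =
     (let x = epSt sel env l q x0 t in snd (env (l, t, x, sel (q t x))))"

definition epStep :: "(('a \<Rightarrow> real) \<Rightarrow> 'a) \<Rightarrow> (nat \<times> nat \<times> 'x \<times> 'a \<Rightarrow> bool \<times> 'x)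
    \<Rightarrow> nat \<Rightarrow> (nat \<Rightarrow> 'x \<Rightarrow> 'a \<Rightarrow> real) \<Rightarrow> 'x \<Rightarrow> nat \<Rightarrow> ('x,'a) step" where
  "epStep sel env l q x0 t =
     (let x = epSt sel env l q x0 t; a = sel (q t x); out = env (l, t, x, a) in (x, a, fst out, snd out))"

(* histUpTo n k t = step of episode k (1 <= k <= n) in period t, when RLSVI is run on
   noise xi, environment table env, initial states init *)
primrec histUpTo :: "nat \<Rightarrow> real \<Rightarrow> real \<Rightarrow> (nat \<Rightarrow> 'x \<Rightarrow> 'a \<Rightarrow> real) \<Rightarrow> (('a \<Rightarrow> real) \<Rightarrow> 'a)
    \<Rightarrow> (nat \<Rightarrow> nat \<Rightarrow> 'x \<Rightarrow> 'a \<Rightarrow> real) \<Rightarrow> (nat \<times> nat \<times> 'x \<times> 'a \<Rightarrow> bool \<times> 'x) \<Rightarrow> (nat \<Rightarrow> 'x)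
    \<Rightarrow> nat \<Rightarrow> nat \<Rightarrow> nat \<Rightarrow> ('x::finite,'a::finite) step" where
  "histUpTo H lam v thbar sel xi env init 0 = (\<lambda>k t. undefined)"
| "histUpTo H lam v thbar sel xi env init (Suc n) =
     (let h = histUpTo H lam v thbar sel xi env init n in
      h(Suc n := epStep sel env (Suc n) (Qv H lam v thbar xi h (Suc n)) (init (Suc n))))"

definition Qrlsvi :: "nat \<Rightarrow> real \<Rightarrow> real \<Rightarrow> (nat \<Rightarrow> 'x::finite \<Rightarrow> 'a::finite \<Rightarrow> real) \<Rightarrow> (('a \<Rightarrow> real) \<Rightarrow> 'a)
    \<Rightarrow> (nat \<Rightarrow> nat \<Rightarrow> 'x \<Rightarrow> 'a \<Rightarrow> real) \<Rightarrow> (nat \<times> nat \<times> 'x \<times> 'a \<Rightarrow> bool \<times> 'x) \<Rightarrow> (nat \<Rightarrow> 'x)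
    \<Rightarrow> nat \<Rightarrow> nat \<Rightarrow> 'x \<Rightarrow> 'a \<Rightarrow> real" where
  "Qrlsvi H lam v thbar sel xi env init l t =
     Qv H lam v thbar xi (histUpTo H lam v thbar sel xi env init (l - 1)) l t"

(* The probability space: i.i.d. standard normal xi_{l,t,x,a}, independent of an
   independent table of MDP outcomes env(k,t,x,a) ~ P t x a and independent initial
   states init k ~ mu0 *)
definition rlsvi_space :: "(nat \<Rightarrow> 'x \<Rightarrow> 'a \<Rightarrow> (bool \<times> 'x) pmf) \<Rightarrow> 'x pmf \<Rightarrow>
    ((nat \<times> nat \<times> 'x \<times> 'a \<Rightarrow> real) \<times> (nat \<times> nat \<times> 'x \<times> 'a \<Rightarrow> bool \<times> 'x) \<times> (nat \<Rightarrow> 'x)) measure" where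
  "rlsvi_space P mu0 =
     (PiM UNIV (\<lambda>_. density lborel std_normal_density)) \<Otimes>\<^sub>M
     ((PiM UNIV (\<lambda>(k,t,x,a). measure_pmf (P t x a))) \<Otimes>\<^sub>M (PiM UNIV (\<lambda>k. measure_pmf mu0)))"

end

theory Submission
  imports Defs
begin

(*
  Each application of F_{l,t} is a posterior mean, i.e. a convex combination of the prior value H
  and the targets r + max Q, plus noise of standard deviation at most sqrt lambda.  So the bound on
  |Q_{l,t}| grows by at most 1 + sqrt lambda * max |xi| per period, and V_{Q_{l,t+1}} is bounded by
  2H + sqrt lambda times the sum over periods of the maxima of |xi| over all episodes and
  state-action pairs.  The expected maximum of n standard Gaussians is at most sqrt (2 ln (2n))
  (exponential moment plus a log-sum-exp bound), and beta >= 2 turns sqrt lambda * sqrt (2 ln (2n))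
  into at most H sqrt (ln (1 + |X||A|HL)).
*)

lemma std_normal_density_mult_exp:
  "std_normal_density x * exp (s * x) = exp (s\<^sup>2 / 2) * normal_density s 1 x"
proof -
  have "exp (- x\<^sup>2 / 2) * exp (s * x) = exp (s\<^sup>2 / 2) * exp (- (x - s)\<^sup>2 / (2 * 1\<^sup>2))"
    by (simp add: exp_add[symmetric] power2_eq_square field_simps)
  then show ?thesis unfolding std_normal_density_def normal_density_def by simp
qed

lemma nn_integral_std_normal_exp:
  "(\<integral>\<^sup>+x. ennreal (std_normal_density x * exp (s * x)) \<partial>lborel) = ennreal (exp (s\<^sup>2 / 2))"
proof -
  have "(\<integral>\<^sup>+x. ennreal (std_normal_density x * exp (s * x)) \<partial>lborel)
       = ennreal (exp (s\<^sup>2 / 2)) * (\<integral>\<^sup>+x. ennreal (normal_density s 1 x) \<partial>lborel)"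
    by (simp add: std_normal_density_mult_exp ennreal_mult nn_integral_cmult)
  also have "(\<integral>\<^sup>+x. ennreal (normal_density s 1 x) \<partial>lborel) = 1"
    by (subst nn_integral_eq_integral) auto
  finally show ?thesis by simp
qed

lemma nn_integral_std_normal_exp_abs_le:
  "(\<integral>\<^sup>+x. ennreal (std_normal_density x) * ennreal (exp (s * \<bar>x\<bar>)) \<partial>lborel) \<le> ennreal (2 * exp (s\<^sup>2 / 2))"
proof -
  have "ennreal (std_normal_density x) * ennreal (exp (s * \<bar>x\<bar>))
        \<le> ennreal (std_normal_density x * exp (s * x)) + ennreal (std_normal_density x * exp ((- s) * x))" for x
  proof -
    have "exp (s * \<bar>x\<bar>) \<le> exp (s * x) + exp ((- s) * x)"
      by (cases "x \<ge> 0") (auto simp: add_increasing add_increasing2)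
    then have "std_normal_density x * exp (s * \<bar>x\<bar>) \<le> std_normal_density x * exp (s * x) + std_normal_density x * exp ((- s) * x)"
      by (metis distrib_left mult_left_mono normal_density_nonneg)
    then show ?thesis
      by (simp add: ennreal_mult[symmetric] ennreal_plus[symmetric] del: ennreal_plus)
  qed
  then have "(\<integral>\<^sup>+x. ennreal (std_normal_density x) * ennreal (exp (s * \<bar>x\<bar>)) \<partial>lborel)
        \<le> (\<integral>\<^sup>+x. ennreal (std_normal_density x * exp (s * x)) + ennreal (std_normal_density x * exp ((- s) * x)) \<partial>lborel)"
    by (rule nn_integral_mono)
  also have "\<dots> = ennreal (exp (s\<^sup>2 / 2)) + ennreal (exp ((- s)\<^sup>2 / 2))"
    using nn_integral_std_normal_exp[of s] nn_integral_std_normal_exp[of "- s"]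
    by (subst nn_integral_add) auto
  also have "\<dots> = ennreal (2 * exp (s\<^sup>2 / 2))"
    by (simp add: ennreal_plus[symmetric] del: ennreal_plus)
  finally show ?thesis .
qed

lemma nn_integral_exp_abs_std_normal_le:
  assumes "distributed M lborel X std_normal_density"
  shows "(\<integral>\<^sup>+\<omega>. ennreal (exp (s * \<bar>X \<omega>\<bar>)) \<partial>M) \<le> ennreal (2 * exp (s\<^sup>2 / 2))"
proof -
  have "(\<integral>\<^sup>+\<omega>. ennreal (exp (s * \<bar>X \<omega>\<bar>)) \<partial>M)
      = (\<integral>\<^sup>+x. ennreal (std_normal_density x) * ennreal (exp (s * \<bar>x\<bar>)) \<partial>lborel)"
    by (rule distributed_nn_integral[OF assms, symmetric]) measurable
  also have "\<dots> \<le> ennreal (2 * exp (s\<^sup>2 / 2))" by (rule nn_integral_std_normal_exp_abs_le)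
  finally show ?thesis .
qed

lemma Max_abs_le_log_sum_exp:
  fixes w :: "'i \<Rightarrow> real"
  assumes "finite I" "I \<noteq> {}" "s > 0" "K > 0"
  shows "Max ((\<lambda>i. \<bar>w i\<bar>) ` I) \<le> (ln K - 1) / s + (\<Sum>i\<in>I. exp (s * \<bar>w i\<bar>)) / (s * K)"
proof -
  obtain y where "y \<in> I" and y: "Max ((\<lambda>i. \<bar>w i\<bar>) ` I) = \<bar>w y\<bar>"
    using Max_in[of "(\<lambda>i. \<bar>w i\<bar>) ` I"] assms by fastforce
  define T where "T = (\<Sum>i\<in>I. exp (s * \<bar>w i\<bar>))"
  have le_T: "exp (s * \<bar>w y\<bar>) \<le> T"
    unfolding T_def using assms \<open>y \<in> I\<close> by (intro member_le_sum) auto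
  then have "T > 0" using exp_gt_zero[of "s * \<bar>w y\<bar>"] by linarith
  have "s * \<bar>w y\<bar> \<le> ln T"
    using le_T \<open>T > 0\<close> by (simp add: ln_ge_iff)
  also have "ln T = ln K + ln (T / K)" using \<open>T > 0\<close> assms by (simp add: ln_div)
  also have "ln (T / K) \<le> T / K - 1" using \<open>T > 0\<close> assms by (intro ln_le_minus_one) simp
  finally have "s * \<bar>w y\<bar> \<le> ln K - 1 + T / K" by simp
  then have "\<bar>w y\<bar> \<le> (ln K - 1 + T / K) / s" using assms by (simp add: field_simps)
  also have "\<dots> = (ln K - 1) / s + T / (s * K)" using assms by (simp add: field_simps)
  finally show ?thesis unfolding y T_def .
qed

lemma nn_integral_Max_abs_std_normal_le:
  fixes X :: "'i \<Rightarrow> 'w \<Rightarrow> real"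
  assumes M: "prob_space M" and J: "finite J" "J \<noteq> {}"
    and normal: "\<And>j. j \<in> J \<Longrightarrow> distributed M lborel (X j) std_normal_density"
  shows "(\<integral>\<^sup>+\<omega>. ennreal (Max ((\<lambda>j. \<bar>X j \<omega>\<bar>) ` J)) \<partial>M) \<le> ennreal (sqrt (2 * ln (2 * real (card J))))"
proof -
  define n where "n = real (card J)"
  define s where "s = sqrt (2 * ln (2 * n))"
  define K where "K = (2 * n)\<^sup>2"
  \<comment> \<open>With this choice exp (s^2/2) = 2n and ln K = s^2, which makes the log-sum-exp bound tight.\<close>
  have "n \<ge> 1" unfolding n_def using J by (simp add: Suc_le_eq card_gt_0_iff)
  then have "s > 0" "K > 0" unfolding s_def K_def by auto
  have exp_s: "exp (s\<^sup>2 / 2) = 2 * n"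
    unfolding s_def using \<open>n \<ge> 1\<close> by simp
  have ln_K: "ln K = s\<^sup>2"
    unfolding K_def s_def using \<open>n \<ge> 1\<close> by (subst ln_realpow) auto
  have "ln K \<ge> 1"
  proof -
    have "exp 1 \<le> (3::real)" by (rule exp_le)
    also have "3 \<le> K" unfolding K_def using \<open>n \<ge> 1\<close> mult_mono[of 1 n 1 n] by (simp add: power2_eq_square)
    finally show ?thesis using \<open>K > 0\<close> by (simp add: ln_ge_iff)
  qed
  define e where "e j \<omega> = ennreal (exp (s * \<bar>X j \<omega>\<bar>))" for j \<omega>
  have e_measurable: "e j \<in> borel_measurable M" if "j \<in> J" for j
  proof -
    have [measurable]: "X j \<in> borel_measurable M"
      using distributed_measurable[OF normal[OF that]] by simp
    show ?thesis unfolding e_def by measurable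
  qed
  have "ennreal (Max ((\<lambda>j. \<bar>X j \<omega>\<bar>) ` J))
      \<le> ennreal ((ln K - 1) / s) + ennreal (1 / (s * K)) * (\<Sum>j\<in>J. e j \<omega>)" for \<omega>
    using Max_abs_le_log_sum_exp[OF J \<open>s > 0\<close> \<open>K > 0\<close>, of "\<lambda>j. X j \<omega>"] \<open>ln K \<ge> 1\<close> \<open>s > 0\<close> \<open>K > 0\<close>
    unfolding e_def by (simp add: sum_nonneg ennreal_leI flip: ennreal_plus ennreal_mult)
  then have "(\<integral>\<^sup>+\<omega>. ennreal (Max ((\<lambda>j. \<bar>X j \<omega>\<bar>) ` J)) \<partial>M)
      \<le> (\<integral>\<^sup>+\<omega>. ennreal ((ln K - 1) / s) + ennreal (1 / (s * K)) * (\<Sum>j\<in>J. e j \<omega>) \<partial>M)"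
    by (intro nn_integral_mono)
  also have "\<dots> = ennreal ((ln K - 1) / s) + ennreal (1 / (s * K)) * (\<Sum>j\<in>J. \<integral>\<^sup>+\<omega>. e j \<omega> \<partial>M)"
    using e_measurable J(1) prob_space.emeasure_space_1[OF M]
    by (simp add: nn_integral_add nn_integral_cmult nn_integral_sum)
  also have "\<dots> \<le> ennreal ((ln K - 1) / s) + ennreal (1 / (s * K)) * (\<Sum>j\<in>J. ennreal (4 * n))"
    using nn_integral_exp_abs_std_normal_le[OF normal, of _ s] unfolding e_def exp_s
    by (intro add_left_mono mult_left_mono sum_mono) auto
  also have "\<dots> = ennreal ((ln K - 1) / s + 1 / (s * K) * (n * (4 * n)))"
    using \<open>ln K \<ge> 1\<close> \<open>s > 0\<close> \<open>K > 0\<close> \<open>n \<ge> 1\<close> unfolding n_def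
    by (simp add: ennreal_of_nat_eq_real_of_nat flip: ennreal_plus ennreal_mult)
  also have "(ln K - 1) / s + 1 / (s * K) * (n * (4 * n)) = s"
  proof -
    have "n * (4 * n) = K" unfolding K_def by (simp add: power2_eq_square)
    then show ?thesis using \<open>s > 0\<close> \<open>K > 0\<close> unfolding ln_K by (simp add: field_simps power2_eq_square)
  qed
  finally show ?thesis unfolding s_def n_def .
qed

lemma prob_space_rlsvi_space: "prob_space (rlsvi_space P mu0)"
  unfolding rlsvi_space_def
  by (intro prob_space_pair prob_space_PiM prob_space_normal_density)
     (auto simp: prob_space_measure_pmf split: prod.splits)

lemma distributed_rlsvi_space_noise:
  fixes P :: "nat \<Rightarrow> 'x::finite \<Rightarrow> 'a::finite \<Rightarrow> (bool \<times> 'x) pmf"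
  shows "distributed (rlsvi_space P mu0) lborel (\<lambda>\<omega>. fst \<omega> j) std_normal_density"
proof -
  let ?N = "PiM UNIV (\<lambda>_::(nat \<times> nat \<times> 'x \<times> 'a). density lborel std_normal_density)"
  let ?M = "(PiM UNIV (\<lambda>(k::nat,t,x,a). measure_pmf (P t x a))) \<Otimes>\<^sub>M (PiM UNIV (\<lambda>k::nat. measure_pmf mu0))"
  have "prob_space ?M"
    by (intro prob_space_pair prob_space_PiM) (auto simp: prob_space_measure_pmf split: prod.splits)
  have "product_prob_space (\<lambda>_::(nat \<times> nat \<times> 'x \<times> 'a). density lborel std_normal_density)"
    by (intro product_prob_spaceI prob_space_normal_density) simp
  have "distr (?N \<Otimes>\<^sub>M ?M) lborel (\<lambda>\<omega>. fst \<omega> j) = distr (distr (?N \<Otimes>\<^sub>M ?M) ?N fst) lborel (\<lambda>y. y j)"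
    by (subst distr_distr) (auto simp: comp_def)
  also have "\<dots> = distr ?N (density lborel std_normal_density) (\<lambda>y. y j)"
    using prob_space.distr_pair_fst[OF \<open>prob_space ?M\<close>] by (intro distr_cong) auto
  also have "\<dots> = density lborel std_normal_density"
    by (rule product_prob_space.PiM_component[OF \<open>product_prob_space _\<close>]) simp
  finally show ?thesis
    unfolding distributed_def rlsvi_space_def by auto
qed

lemma abs_VQ_le:
  fixes Q :: "'x::finite \<Rightarrow> 'a::finite \<Rightarrow> real"
  assumes "\<And>y a. \<bar>Q y a\<bar> \<le> B"
  shows "\<bar>VQ Q r y\<bar> \<le> 1 + B"
proof -
  have "Max (range (Q y)) \<in> range (Q y)" by (rule Max_in) auto
  then obtain a where "Max (range (Q y)) = Q y a" by blast
  then show ?thesis using assms[of y a] unfolding VQ_def rew_def by auto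
qed

lemma VQnorm_le:
  fixes Q :: "'x::finite \<Rightarrow> 'a::finite \<Rightarrow> real"
  assumes "\<And>y a. \<bar>Q y a\<bar> \<le> B"
  shows "VQnorm Q \<le> 1 + B"
proof -
  have "{\<bar>VQ Q r y\<bar> | r y. True} = (\<lambda>(r, y). \<bar>VQ Q r y\<bar>) ` UNIV" by auto
  then show ?thesis unfolding VQnorm_def
    by (simp add: abs_VQ_le[OF assms])
qed

lemma sig2_pos: "lam > 0 \<Longrightarrow> v > 0 \<Longrightarrow> sig2 lam v n > 0"
  unfolding sig2_def by (simp add: add_pos_nonneg)

lemma sig2_le:
  assumes "lam > 0" "v > 0"
  shows "sig2 lam v n \<le> lam"
proof -
  have "inverse (1 / lam + real n / v) \<le> inverse (1 / lam)"
    using assms by (intro le_imp_inverse_le) auto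
  then show ?thesis unfolding sig2_def by simp
qed

lemma abs_posterior_mean_le:
  assumes lam: "lam > 0" and v: "v > 0" and "finite D"
    and "\<bar>\<theta>\<bar> \<le> B" and "\<And>k. k \<in> D \<Longrightarrow> \<bar>y k\<bar> \<le> B"
  shows "\<bar>sig2 lam v (card D) * (\<theta> / lam + (1 / v) * (\<Sum>k\<in>D. y k))\<bar> \<le> B"
proof -
  let ?w = "1 / lam + real (card D) / v"
  have "?w > 0" using lam v by (simp add: add_pos_nonneg)
  have "\<bar>\<theta> / lam + (1 / v) * (\<Sum>k\<in>D. y k)\<bar> \<le> \<bar>\<theta>\<bar> / lam + (1 / v) * \<bar>\<Sum>k\<in>D. y k\<bar>"
    using lam v abs_triangle_ineq[of "\<theta> / lam" "(1 / v) * (\<Sum>k\<in>D. y k)"]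
    by (simp add: abs_mult)
  also have "\<dots> \<le> \<bar>\<theta>\<bar> / lam + (1 / v) * (\<Sum>k\<in>D. \<bar>y k\<bar>)"
    using v by (intro add_left_mono mult_left_mono sum_abs) auto
  also have "\<dots> \<le> B / lam + (1 / v) * (\<Sum>k\<in>D. B)"
    using assms by (intro add_mono divide_right_mono mult_left_mono sum_mono) auto
  also have "\<dots> = B * ?w" by (simp add: field_simps)
  finally have "\<bar>\<theta> / lam + (1 / v) * (\<Sum>k\<in>D. y k)\<bar> \<le> B * ?w" .
  then show ?thesis using \<open>?w > 0\<close> unfolding sig2_def by (simp add: abs_mult field_simps)
qed

lemma abs_Fop_le:
  fixes Q :: "'x::finite \<Rightarrow> 'a::finite \<Rightarrow> real"
  assumes lam: "lam > 0" and v: "v > 0"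
    and "\<And>y b. \<bar>Q y b\<bar> \<le> B" and "\<bar>thbar t x a\<bar> \<le> 1 + B" and "\<bar>xi l t x a\<bar> \<le> Z"
  shows "\<bar>Fop lam v thbar xi hist l t Q x a\<bar> \<le> 1 + B + sqrt lam * Z"
proof -
  define D where "D = Didx hist l t x a"
  have "finite D" unfolding D_def Didx_def by auto
  have mean: "\<bar>sig2 lam v (card D) * (thbar t x a / lam
      + (1 / v) * (\<Sum>k\<in>D. VQ Q (fst (snd (snd (hist k t)))) (snd (snd (snd (hist k t))))))\<bar> \<le> 1 + B"
    using assms by (intro abs_posterior_mean_le \<open>finite D\<close> abs_VQ_le) auto
  have noise: "\<bar>sqrt (sig2 lam v (card D)) * xi l t x a\<bar> \<le> sqrt lam * Z"
    using sig2_pos[OF lam v] sig2_le[OF lam v] assms(5) lam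
    by (simp add: abs_mult less_imp_le mult_mono)
  show ?thesis
    using abs_triangle_ineq[THEN order_trans, OF add_mono[OF mean noise]]
    unfolding Fop_def Let_def D_def by simp
qed

lemma abs_Qb_le:
  fixes xi :: "nat \<Rightarrow> nat \<Rightarrow> 'x::finite \<Rightarrow> 'a::finite \<Rightarrow> real"
  assumes lam: "lam > 0" and v: "v > 0" and "Hb \<ge> 0"
    and th: "\<And>t x a. \<bar>thbar t x a\<bar> \<le> Hb" and xi: "\<And>t x a. \<bar>xi l t x a\<bar> \<le> Z t"
    and "m \<le> H"
  shows "\<bar>Qb H lam v thbar xi hist l m x a\<bar> \<le> Hb + real m + sqrt lam * (\<Sum>t\<in>{H-m..<H}. Z t)"
  using \<open>m \<le> H\<close>
proof (induction m arbitrary: x a)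
  case 0
  then show ?case using \<open>Hb \<ge> 0\<close> by simp
next
  case (Suc m)
  have "Z t \<ge> 0" for t using xi[of t] by (meson abs_ge_zero order_trans)
  define B where "B = Hb + real m + sqrt lam * (\<Sum>t\<in>{H-m..<H}. Z t)"
  have "Hb \<le> B" unfolding B_def using \<open>\<And>t. Z t \<ge> 0\<close> lam by (simp add: sum_nonneg)
  have "{H - Suc m..<H} = insert (H - Suc m) {H-m..<H}" using Suc.prems by auto
  moreover have "\<bar>Qb H lam v thbar xi hist l (Suc m) x a\<bar> \<le> 1 + B + sqrt lam * Z (H - Suc m)"
    using Suc th[of "H - Suc m" x a] \<open>Hb \<le> B\<close>
    by (simp, intro abs_Fop_le[OF lam v] xi) (auto simp: B_def)
  ultimately show ?case using Suc.prems by (simp add: B_def algebra_simps)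
qed

lemma VQnorm_Qv_Suc_le:
  fixes xi :: "nat \<Rightarrow> nat \<Rightarrow> 'x::finite \<Rightarrow> 'a::finite \<Rightarrow> real"
  assumes "lam > 0" "v > 0" "Hb \<ge> 0" "t < H"
    and "\<And>t x a. \<bar>thbar t x a\<bar> \<le> Hb" and "\<And>t x a. \<bar>xi l t x a\<bar> \<le> Z t"
  shows "VQnorm (Qv H lam v thbar xi hist l (Suc t)) \<le> Hb + real H + sqrt lam * (\<Sum>t'\<in>{Suc t..<H}. Z t')"
proof -
  have "VQnorm (Qv H lam v thbar xi hist l (Suc t))
      \<le> 1 + (Hb + real (H - Suc t) + sqrt lam * (\<Sum>t'\<in>{H - (H - Suc t)..<H}. Z t'))"
    unfolding Qv_def by (intro VQnorm_le abs_Qb_le assms) simp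
  then show ?thesis using \<open>t < H\<close> by (simp add: of_nat_diff)
qed

lemma sqrt_variance_log_term_le:
  assumes "H > 0" "beta \<ge> 2" "n \<ge> 1"
  shows "sqrt (real H ^ 2 / beta) * (real (H - 1) * sqrt (2 * ln (2 * real n)))
    \<le> real H ^ 2 * sqrt (ln (1 + real n * real H))"
proof (cases "H = 1")
  case True
  then show ?thesis using \<open>n \<ge> 1\<close> by simp
next
  case False
  then have "H \<ge> 2" using \<open>H > 0\<close> by simp
  have "ln (2 * real n) > 0" using \<open>n \<ge> 1\<close> by simp
  have "sqrt (real H ^ 2 / beta) * sqrt (2 * ln (2 * real n)) = sqrt (real H ^ 2 * (2 / beta) * ln (2 * real n))"
    by (simp add: real_sqrt_mult[symmetric])
  also have "\<dots> \<le> sqrt (real H ^ 2 * 1 * ln (2 * real n))"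
    using \<open>beta \<ge> 2\<close> \<open>ln (2 * real n) > 0\<close> by (intro real_sqrt_le_mono mult_right_mono mult_left_mono) auto
  also have "\<dots> \<le> real H * sqrt (ln (1 + real n * real H))"
  proof -
    have "2 * real n \<le> 1 + real n * real H"
      using \<open>H \<ge> 2\<close> mult_left_mono[of 2 "real H" "real n"] by simp
    then have "ln (2 * real n) \<le> ln (1 + real n * real H)" using \<open>n \<ge> 1\<close> by simp
    then show ?thesis by (simp add: real_sqrt_mult mult_left_mono)
  qed
  finally have "sqrt (real H ^ 2 / beta) * sqrt (2 * ln (2 * real n)) \<le> real H * sqrt (ln (1 + real n * real H))" .
  then have "real (H - 1) * (sqrt (real H ^ 2 / beta) * sqrt (2 * ln (2 * real n)))
      \<le> real H * (real H * sqrt (ln (1 + real n * real H)))"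
    using \<open>ln (2 * real n) > 0\<close> \<open>beta \<ge> 2\<close> by (rule_tac mult_mono) auto
  then show ?thesis by (simp add: power2_eq_square mult_ac)
qed

definition noise_max :: "(nat \<times> nat \<times> 'x \<times> 'a \<Rightarrow> real) \<Rightarrow> nat \<Rightarrow> nat \<Rightarrow> real" where
  "noise_max \<xi> L t = Max ((\<lambda>j. \<bar>\<xi> j\<bar>) ` ({1..L} \<times> {t} \<times> UNIV \<times> UNIV))"

lemma abs_le_noise_max:
  fixes \<xi> :: "nat \<times> nat \<times> 'x::finite \<times> 'a::finite \<Rightarrow> real"
  assumes "l \<in> {1..L}"
  shows "\<bar>\<xi> (l, t, x, a)\<bar> \<le> noise_max \<xi> L t"
  unfolding noise_max_def using assms by (intro Max_ge) auto

lemma noise_max_nonneg: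
  fixes \<xi> :: "nat \<times> nat \<times> 'x::finite \<times> 'a::finite \<Rightarrow> real"
  assumes "L > 0"
  shows "noise_max \<xi> L t \<ge> 0"
  using abs_le_noise_max[of 1 L \<xi> t undefined undefined] assms by simp

lemma nn_integral_noise_max_le:
  fixes P :: "nat \<Rightarrow> 'x::finite \<Rightarrow> 'a::finite \<Rightarrow> (bool \<times> 'x) pmf"
  assumes "L > 0"
  shows "(\<integral>\<^sup>+\<omega>. ennreal (noise_max (fst \<omega>) L t) \<partial>rlsvi_space P mu0)
    \<le> ennreal (sqrt (2 * ln (2 * real (L * CARD('x) * CARD('a)))))"
proof -
  let ?J = "{1..L} \<times> {t} \<times> (UNIV :: 'x set) \<times> (UNIV :: 'a set)"
  have card_J: "card ?J = L * CARD('x) * CARD('a)" by (simp add: card_cartesian_product)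
  have "?J \<noteq> {}" using assms by auto
  then have "(\<integral>\<^sup>+\<omega>. ennreal (Max ((\<lambda>j. \<bar>fst \<omega> j\<bar>) ` ?J)) \<partial>rlsvi_space P mu0)
      \<le> ennreal (sqrt (2 * ln (2 * real (card ?J))))"
    by (intro nn_integral_Max_abs_std_normal_le prob_space_rlsvi_space distributed_rlsvi_space_noise) auto
  then show ?thesis unfolding noise_max_def card_J .
qed

lemma VQnorm_Qrlsvi_le:
  assumes "lam > 0" "v > 0" "l \<in> {1..L}" "t < H"
  shows "VQnorm (Qrlsvi H lam v (\<lambda>t x a. real H) sel (\<lambda>l t x a. \<xi> (l, t, x, a)) env init l (Suc t))
    \<le> 2 * real H + sqrt lam * (\<Sum>t'\<in>{1..<H}. noise_max \<xi> L t')"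
proof -
  have "VQnorm (Qrlsvi H lam v (\<lambda>t x a. real H) sel (\<lambda>l t x a. \<xi> (l, t, x, a)) env init l (Suc t))
      \<le> real H + real H + sqrt lam * (\<Sum>t'\<in>{Suc t..<H}. noise_max \<xi> L t')"
    unfolding Qrlsvi_def using assms abs_le_noise_max[OF assms(3), of \<xi>]
    by (rule_tac VQnorm_Qv_Suc_le[where Z = "noise_max \<xi> L" and Hb = "real H"]) auto
  also have "\<dots> \<le> 2 * real H + sqrt lam * (\<Sum>t'\<in>{1..<H}. noise_max \<xi> L t')"
    using assms noise_max_nonneg[of L \<xi>] by (intro add_mono mult_left_mono sum_mono2) auto
  finally show ?thesis .
qed

lemma SUP_VQnorm_Qrlsvi_le:
  assumes "L > 0" "lam > 0" "v > 0"
  shows "(SUP p \<in> {1..L} \<times> {..<H}. ennreal (VQnorm (Qrlsvi H lam v (\<lambda>t x a. real H) sel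
            (\<lambda>l t x a. \<xi> (l, t, x, a)) env init (fst p) (snd p + 1))))
    \<le> ennreal (2 * real H) + ennreal (sqrt lam) * (\<Sum>t\<in>{1..<H}. ennreal (noise_max \<xi> L t))"
proof (rule SUP_least)
  fix p assume "p \<in> {1..L} \<times> {..<H}"
  then have "VQnorm (Qrlsvi H lam v (\<lambda>t x a. real H) sel
      (\<lambda>l t x a. \<xi> (l, t, x, a)) env init (fst p) (snd p + 1))
      \<le> 2 * real H + sqrt lam * (\<Sum>t\<in>{1..<H}. noise_max \<xi> L t)"
    using VQnorm_Qrlsvi_le[where \<xi> = \<xi>, OF \<open>lam > 0\<close> \<open>v > 0\<close>] by auto
  also have "ennreal \<dots> = ennreal (2 * real H) + ennreal (sqrt lam) * (\<Sum>t\<in>{1..<H}. ennreal (noise_max \<xi> L t))"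
  proof -
    have "(\<Sum>t\<in>{1..<H}. noise_max \<xi> L t) \<ge> 0"
      using assms by (intro sum_nonneg noise_max_nonneg)
    moreover have "(\<Sum>t\<in>{1..<H}. ennreal (noise_max \<xi> L t)) = ennreal (\<Sum>t\<in>{1..<H}. noise_max \<xi> L t)"
      using assms by (intro sum_ennreal noise_max_nonneg)
    ultimately show ?thesis
      using \<open>lam > 0\<close> by (simp add: ennreal_plus ennreal_mult)
  qed
  finally show "ennreal (VQnorm (Qrlsvi H lam v (\<lambda>t x a. real H) sel
      (\<lambda>l t x a. \<xi> (l, t, x, a)) env init (fst p) (snd p + 1)))
      \<le> ennreal (2 * real H) + ennreal (sqrt lam) * (\<Sum>t\<in>{1..<H}. ennreal (noise_max \<xi> L t))"
    using ennreal_leI by blast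
qed

theorem mainTheorem9:
  fixes H L :: nat and beta :: real
    and P :: "nat \<Rightarrow> 'x::finite \<Rightarrow> 'a::finite \<Rightarrow> (bool \<times> 'x) pmf" and mu0 :: "'x pmf"
    and sel :: "('a \<Rightarrow> real) \<Rightarrow> 'a"
  assumes "H > 0" and "beta \<ge> 2"
    and "\<And>f b. f b \<le> f (sel f)"
  shows "(\<integral>\<^sup>+ \<omega>. (SUP p \<in> {1..L} \<times> {..<H}.
            ennreal (VQnorm (Qrlsvi H (real H ^ 2 / beta) (real H ^ 2) (\<lambda>t x a. real H) sel
                (\<lambda>l t x a. fst \<omega> (l, t, x, a)) (fst (snd \<omega>)) (snd (snd \<omega>)) (fst p) (snd p + 1))))
          \<partial>rlsvi_space P mu0)
         \<le> ennreal (2 * real H + real H ^ 2 *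
              sqrt (ln (1 + real (CARD('x)) * real (CARD('a)) * real H * real L)))"
proof (cases "L = 0")
  case True
  then show ?thesis by (simp add: bot_ennreal)
next
  case False
  define lam where "lam = real H ^ 2 / beta"
  define n where "n = L * CARD('x) * CARD('a)"
  define Z where "Z \<omega> = (\<Sum>t\<in>{1..<H}. ennreal (noise_max (fst \<omega>) L t))"
    for \<omega> :: "(nat \<times> nat \<times> 'x \<times> 'a \<Rightarrow> real) \<times> (nat \<times> nat \<times> 'x \<times> 'a \<Rightarrow> bool \<times> 'x) \<times> (nat \<Rightarrow> 'x)"
  have "lam > 0" "n \<ge> 1" unfolding lam_def n_def using \<open>H > 0\<close> \<open>beta \<ge> 2\<close> False by auto
  have "(SUP p \<in> {1..L} \<times> {..<H}. ennreal (VQnorm (Qrlsvi H lam (real H ^ 2) (\<lambda>t x a. real H) sel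
                (\<lambda>l t x a. fst \<omega> (l, t, x, a)) (fst (snd \<omega>)) (snd (snd \<omega>)) (fst p) (snd p + 1))))
      \<le> ennreal (2 * real H) + ennreal (sqrt lam) * Z \<omega>" for \<omega>
    unfolding Z_def using False \<open>lam > 0\<close> \<open>H > 0\<close> by (intro SUP_VQnorm_Qrlsvi_le) auto
  then have "(\<integral>\<^sup>+ \<omega>. (SUP p \<in> {1..L} \<times> {..<H}. ennreal (VQnorm (Qrlsvi H lam (real H ^ 2)
                (\<lambda>t x a. real H) sel (\<lambda>l t x a. fst \<omega> (l, t, x, a)) (fst (snd \<omega>)) (snd (snd \<omega>))
                (fst p) (snd p + 1)))) \<partial>rlsvi_space P mu0)
      \<le> (\<integral>\<^sup>+\<omega>. ennreal (2 * real H) + ennreal (sqrt lam) * Z \<omega> \<partial>rlsvi_space P mu0)"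
    by (rule nn_integral_mono)
  also have "\<dots> = ennreal (2 * real H) + ennreal (sqrt lam) *
      (\<Sum>t\<in>{1..<H}. \<integral>\<^sup>+\<omega>. ennreal (noise_max (fst \<omega>) L t) \<partial>rlsvi_space P mu0)"
    using prob_space.emeasure_space_1[OF prob_space_rlsvi_space[of P mu0]]
    unfolding Z_def noise_max_def rlsvi_space_def
    by (simp add: nn_integral_add nn_integral_cmult nn_integral_sum)
  also have "\<dots> \<le> ennreal (2 * real H) + ennreal (sqrt lam) * (\<Sum>t\<in>{1..<H}. ennreal (sqrt (2 * ln (2 * real n))))"
    using False unfolding n_def by (intro add_left_mono mult_left_mono sum_mono nn_integral_noise_max_le) auto
  also have "\<dots> = ennreal (2 * real H + sqrt lam * (real (H - 1) * sqrt (2 * ln (2 * real n))))"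
    using \<open>n \<ge> 1\<close> \<open>lam > 0\<close>
    by (simp add: ennreal_plus ennreal_mult ennreal_of_nat_eq_real_of_nat zero_le_mult_iff)
  also have "\<dots> \<le> ennreal (2 * real H + real H ^ 2 * sqrt (ln (1 + real n * real H)))"
    unfolding lam_def using sqrt_variance_log_term_le[OF \<open>H > 0\<close> \<open>beta \<ge> 2\<close> \<open>n \<ge> 1\<close>]
    by (intro ennreal_leI) simp
  finally show ?thesis by (simp add: lam_def n_def mult_ac)
qed

end
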